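(* Let $k$ be a field of characteristic zero, $S=k[x,y]$, let $a,b$ be positive integers and $J=(x^a,y^b)\subset S$, and let $I$ be a monomial ideal of $S$ with $J\subset I$. Then the graded $S$-module $I/J$ has the strong Lefschetz property.
   Context: $S$ is standard graded. A finite graded $S$-module $M=\bigoplus_i M_i$ has the strong Lefschetz property if there exists a linear form $\ell\in S_1$ such that the multiplication map $\times\ell^d\colon M_i\to M_{i+d}$ has maximal rank (is injective or surjective) for all $d>0$ and all $i$. *)

theory Defs
  imports "HOL-Library.Poly_Mapping" "HOL-Library.Product_Plus"
begin

text \<open>The polynomial ring S = k[x,y]: finitely supported functions from exponent
  pairs (i,j) (standing for the monomial x^i y^j) to k, with convolution product.\<close>

type_synonym 'k poly2 = "(nat \<times> nat) \<Rightarrow>\<^sub>0 'k"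

definition mono2 :: "nat \<Rightarrow> nat \<Rightarrow> 'k::comm_ring_1 poly2" where
  "mono2 i j = Poly_Mapping.single (i, j) 1"

definition varx :: "'k::comm_ring_1 poly2" where "varx = mono2 1 0"
definition vary :: "'k::comm_ring_1 poly2" where "vary = mono2 0 1"

definition homog :: "nat \<Rightarrow> 'k::comm_ring_1 poly2 set" where
  "homog n = {p. \<forall>(i, j) \<in> Poly_Mapping.keys p. i + j = n}"

definition ideal_gen :: "'k::comm_ring_1 poly2 set \<Rightarrow> 'k poly2 set" where
  "ideal_gen G = {p. \<exists>F c. finite F \<and> F \<subseteq> G \<and> p = (\<Sum>g\<in>F. c g * g)}"

definition monomial_ideal :: "'k::comm_ring_1 poly2 set \<Rightarrow> bool" where
  "monomial_ideal I \<longleftrightarrow> (\<exists>E. I = ideal_gen ((\<lambda>(i, j). mono2 i j) ` E))"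

text \<open>For ideals J \<subseteq> I, the graded module M = I/J has graded pieces
  M_n = (I \<inter> S_n)/(J \<inter> S_n).  Multiplication by ell^d : M_n \<rightarrow> M_(n+d) is injective
  resp. surjective, unfolded on representatives.\<close>
definition mult_inj :: "'k::comm_ring_1 poly2 set \<Rightarrow> 'k poly2 set \<Rightarrow> 'k poly2 \<Rightarrow> nat \<Rightarrow> nat \<Rightarrow> bool" where
  "mult_inj I J ell d n \<longleftrightarrow>
     (\<forall>f \<in> I \<inter> homog n. ell ^ d * f \<in> J \<longrightarrow> f \<in> J)"

definition mult_surj :: "'k::comm_ring_1 poly2 set \<Rightarrow> 'k poly2 set \<Rightarrow> 'k poly2 \<Rightarrow> nat \<Rightarrow> nat \<Rightarrow> bool" where
  "mult_surj I J ell d n \<longleftrightarrow>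
     (\<forall>g \<in> I \<inter> homog (n + d). \<exists>f \<in> I \<inter> homog n. g - ell ^ d * f \<in> J)"

definition strong_lefschetz_quot :: "'k::comm_ring_1 poly2 set \<Rightarrow> 'k poly2 set \<Rightarrow> bool" where
  "strong_lefschetz_quot I J \<longleftrightarrow>
     (\<exists>ell \<in> homog 1. \<forall>d > 0. \<forall>n. mult_inj I J ell d n \<or> mult_surj I J ell d n)"

end

theory Submission
  imports Defs "HOL-Library.Product_Order" "HOL-Computational_Algebra.Polynomial"
    "Jordan_Normal_Form.Determinant"
begin

(* Both I and J = (x^a, y^b) are spanned by monomials, so (I/J)_n has the basis of monomials
   x^i y^(n-i) with (i, n-i) above an exponent of I and inside the box i < a, n - i < b.
   In these bases, multiplication by (x+y)^d has the matrix of binomial coefficients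
   (d choose (c - i)).  The heart of the proof: any set R of columns of this matrix with |R| at
   most the number a + b - 1 - (n+d) of rows is linearly independent.  Rescaling a relation by
   factorials turns it into vanishing sums of products u^(k) v^(l) of falling factorials, with
   u + v and k + l fixed; an Euler-type recurrence pushes this down to the vanishing of all
   "moments" of degree < |R|, and a Lagrange polynomial then kills each coefficient.  If the
   basis of (I/J)_n is that small, multiplication by (x+y)^d is injective; otherwise the box has
   exactly a + b - 1 - (n+d) monomials in degree n+d, a square submatrix is invertible, and the
   map is onto all of (S/J)_(n+d). *)

section \<open>Monomial ideals\<close>

lemma lookup_single_times:
  fixes g :: "'k::comm_ring_1 poly2"
  shows "Poly_Mapping.lookup (Poly_Mapping.single (i, j) v * g) (c, e) =
    (if i \<le> c \<and> j \<le> e then v * Poly_Mapping.lookup g (c - i, e - j) else 0)"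
proof -
  have "((c, e) = (i, j) + q) \<longleftrightarrow> i \<le> c \<and> j \<le> e \<and> q = (c - i, e - j)" for q
    by (cases q) auto
  then show ?thesis
    by (cases "i \<le> c"; cases "j \<le> e")
      (simp_all add: lookup_mult lookup_single when_mult mult_when Sum_any_right_distrib)
qed

lemma poly_mapping_sum_single_keys:
  "(\<Sum>k\<in>Poly_Mapping.keys p. Poly_Mapping.single k (Poly_Mapping.lookup p k)) = p"
  by (rule poly_mapping_eqI) (simp add: lookup_sum lookup_single when_def in_keys_iff)

lemma ideal_gen_0 [simp]: "0 \<in> ideal_gen G"
  unfolding ideal_gen_def by (auto intro!: exI[of _ "{}"])

lemma ideal_gen_generator: "g \<in> G \<Longrightarrow> s * g \<in> ideal_gen G"
  unfolding ideal_gen_def by (auto intro!: exI[of _ "{g}"] exI[of _ "\<lambda>_. s"])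

lemma ideal_gen_add:
  assumes "p \<in> ideal_gen G" "q \<in> ideal_gen G"
  shows "p + q \<in> ideal_gen G"
proof -
  obtain F c where F: "finite F" "F \<subseteq> G" "p = (\<Sum>g\<in>F. c g * g)"
    using assms(1) unfolding ideal_gen_def by blast
  obtain F' c' where F': "finite F'" "F' \<subseteq> G" "q = (\<Sum>g\<in>F'. c' g * g)"
    using assms(2) unfolding ideal_gen_def by blast
  have "p = (\<Sum>g\<in>F \<union> F'. (if g \<in> F then c g else 0) * g)"
    unfolding F(3) using F(1) F'(1) by (intro sum.mono_neutral_cong_left) auto
  moreover have "q = (\<Sum>g\<in>F \<union> F'. (if g \<in> F' then c' g else 0) * g)"
    unfolding F'(3) using F(1) F'(1) by (intro sum.mono_neutral_cong_left) auto
  ultimately have "p + q =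
      (\<Sum>g\<in>F \<union> F'. ((if g \<in> F then c g else 0) + (if g \<in> F' then c' g else 0)) * g)"
    by (simp add: sum.distrib distrib_right)
  with F F' show ?thesis
    unfolding ideal_gen_def by (intro CollectI exI conjI) auto
qed

lemma ideal_gen_sum:
  "finite A \<Longrightarrow> (\<And>x. x \<in> A \<Longrightarrow> f x \<in> ideal_gen G) \<Longrightarrow> sum f A \<in> ideal_gen G"
  by (induction A rule: finite_induct) (auto intro: ideal_gen_add)

abbreviation monomials :: "(nat \<times> nat) set \<Rightarrow> 'k::comm_ring_1 poly2 set" where
  "monomials E \<equiv> (\<lambda>(i, j). mono2 i j) ` E"

lemma single_in_monomial_ideal:
  assumes "e \<in> E" "e \<le> k"
  shows "(Poly_Mapping.single k v :: 'k::comm_ring_1 poly2) \<in> ideal_gen (monomials E)"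
proof -
  obtain e1 e2 k1 k2 where "e = (e1, e2)" "k = (k1, k2)" by fastforce
  with assms have "Poly_Mapping.single k v = Poly_Mapping.single (k1 - e1, k2 - e2) v * mono2 e1 e2"
    by (simp add: mono2_def mult_single)
  with assms \<open>e = (e1, e2)\<close> show ?thesis
    by (metis (no_types, lifting) case_prod_conv ideal_gen_generator image_eqI)
qed

lemma keys_monomial_ideal:
  fixes p :: "'k::comm_ring_1 poly2"
  assumes "p \<in> ideal_gen (monomials E)" "k \<in> Poly_Mapping.keys p"
  shows "\<exists>e\<in>E. e \<le> k"
proof -
  obtain F c where F: "finite F" "F \<subseteq> monomials E" "p = (\<Sum>g\<in>F. c g * g)"
    using assms(1) unfolding ideal_gen_def by blast
  then have "(\<Sum>g\<in>F. Poly_Mapping.lookup (c g * g) k) \<noteq> 0"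
    using assms(2) by (simp add: lookup_sum in_keys_iff)
  then obtain g where "g \<in> F" "Poly_Mapping.lookup (c g * g) k \<noteq> 0"
    by (rule sum.not_neutral_contains_not_neutral)
  moreover from this F obtain e1 e2 where "(e1, e2) \<in> E" "g = mono2 e1 e2"
    by auto
  moreover obtain k1 k2 where "k = (k1, k2)"
    by fastforce
  ultimately have "Poly_Mapping.lookup (Poly_Mapping.single (e1, e2) 1 * c g) (k1, k2) \<noteq> 0"
    by (simp add: mono2_def mult.commute)
  then have "e1 \<le> k1 \<and> e2 \<le> k2"
    by (simp add: lookup_single_times split: if_splits)
  with \<open>(e1, e2) \<in> E\<close> \<open>k = (k1, k2)\<close> show ?thesis
    by (intro bexI[of _ "(e1, e2)"]) auto
qed

lemma monomial_ideal_iff: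
  fixes p :: "'k::comm_ring_1 poly2"
  shows "p \<in> ideal_gen (monomials E) \<longleftrightarrow> (\<forall>k\<in>Poly_Mapping.keys p. \<exists>e\<in>E. e \<le> k)"
proof
  assume "\<forall>k\<in>Poly_Mapping.keys p. \<exists>e\<in>E. e \<le> k"
  then have "(\<Sum>k\<in>Poly_Mapping.keys p. Poly_Mapping.single k (Poly_Mapping.lookup p k))
      \<in> ideal_gen (monomials E)"
    by (intro ideal_gen_sum) (auto intro: single_in_monomial_ideal)
  then show "p \<in> ideal_gen (monomials E)"
    by (simp only: poly_mapping_sum_single_keys)
qed (use keys_monomial_ideal in blast)

lemma varx_power: "(varx :: 'k::comm_ring_1 poly2) ^ n = mono2 n 0"
  by (induction n) (simp_all add: varx_def mono2_def mult_single flip: zero_prod_def)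

lemma vary_power: "(vary :: 'k::comm_ring_1 poly2) ^ n = mono2 0 n"
  by (induction n) (simp_all add: vary_def mono2_def mult_single flip: zero_prod_def)

section \<open>Falling factorials and a Vandermonde-type independence\<close>

definition falling_fact :: "nat \<Rightarrow> nat \<Rightarrow> nat" where
  "falling_fact x k = (\<Prod>r<k. x - r)"

lemma falling_fact_0 [simp]: "falling_fact x 0 = 1"
  by (simp add: falling_fact_def)

lemma falling_fact_Suc: "falling_fact x (Suc k) = falling_fact x k * (x - k)"
  by (simp add: falling_fact_def)

lemma falling_fact_eq_0: "x < k \<Longrightarrow> falling_fact x k = 0"
  unfolding falling_fact_def by (rule prod_zero) auto

lemma fact_diff_mult_falling_fact: "k \<le> x \<Longrightarrow> fact (x - k) * falling_fact x k = (fact x :: nat)"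
proof (induction k)
  case (Suc k)
  then have "x - k = Suc (x - Suc k)"
    by simp
  with Suc show ?case
    by (simp add: falling_fact_Suc algebra_simps)
qed simp

lemma choose_mult_fact_eq_falling_fact:
  assumes "u + v = d + k + l"
  shows "(if k \<le> u then d choose (u - k) else 0) * fact u * fact v =
    fact d * falling_fact u k * (falling_fact v l :: nat)"
proof (cases "k \<le> u \<and> l \<le> v")
  case True
  define p q where "p = u - k" and "q = v - l"
  have "p + q = d"
    using assms True by (simp add: p_def q_def)
  have "(d choose p) * fact u * fact v =
      (d choose p) * (fact p * falling_fact u k) * (fact q * falling_fact v l)"
    using True by (simp add: p_def q_def fact_diff_mult_falling_fact)
  also have "\<dots> = (fact p * fact q * (d choose p)) * falling_fact u k * falling_fact v l"
    by (simp add: ac_simps)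
  also have "fact p * fact q * (d choose p) = (fact d :: nat)"
    using binomial_fact_lemma[of p d] by (simp flip: \<open>p + q = d\<close>)
  finally show ?thesis
    using True by (simp add: p_def)
next
  case False
  with assms show ?thesis
    by (auto simp: falling_fact_eq_0 binomial_eq_0)
qed

lemma falling_fact_Suc_add:
  assumes "u + v = T"
  shows "falling_fact u (Suc k) * falling_fact v l + falling_fact u k * falling_fact v (Suc l) =
    (T - k - l) * (falling_fact u k * falling_fact v l)"
proof (cases "k \<le> u \<and> l \<le> v")
  case True
  with assms have "T - k - l = (u - k) + (v - l)"
    by simp
  then show ?thesis
    by (simp add: falling_fact_Suc algebra_simps)
qed (auto simp: falling_fact_Suc falling_fact_eq_0)

definition falling_poly :: "nat \<Rightarrow> 'k::comm_ring_1 poly" where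
  "falling_poly k = (\<Prod>r<k. [:- of_nat r, 1:])"

lemma poly_falling_poly:
  "poly (falling_poly k) (of_nat x :: 'k::comm_ring_1) = of_nat (falling_fact x k)"
proof (induction k)
  case (Suc k)
  then show ?case
    by (cases "k \<le> x")
      (simp_all add: falling_poly_def falling_fact_Suc falling_fact_eq_0 algebra_simps)
qed (simp add: falling_poly_def)

lemma degree_falling_poly: "degree (falling_poly k :: 'k::idom poly) = k"
  unfolding falling_poly_def by (subst degree_prod_sum_eq) auto

lemma lead_coeff_falling_poly: "lead_coeff (falling_poly k :: 'k::idom poly) = 1"
  unfolding falling_poly_def lead_coeff_prod by simp

lemma sum_poly_eq_0_of_monic_basis:
  fixes B :: "nat \<Rightarrow> 'k::idom poly"
  assumes deg: "\<And>j. degree (B j) = j" and monic: "\<And>j. lead_coeff (B j) = 1"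
    and basis: "\<And>j. j < M \<Longrightarrow> (\<Sum>i\<in>R. w i * poly (B j) (x i)) = 0"
    and "degree P < M"
  shows "(\<Sum>i\<in>R. w i * poly P (x i)) = 0"
  using \<open>degree P < M\<close>
proof (induction "degree P" arbitrary: P rule: less_induct)
  case less
  define n where "n = degree P"
  define Q where "Q = P - smult (lead_coeff P) (B n)"
  have "w i * poly P (x i) = w i * poly Q (x i) + lead_coeff P * (w i * poly (B n) (x i))" for i
    by (simp add: Q_def algebra_simps)
  then have "(\<Sum>i\<in>R. w i * poly P (x i)) =
      (\<Sum>i\<in>R. w i * poly Q (x i)) + lead_coeff P * (\<Sum>i\<in>R. w i * poly (B n) (x i))"
    by (simp add: sum.distrib sum_distrib_left)
  moreover have "(\<Sum>i\<in>R. w i * poly (B n) (x i)) = 0"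
    using basis less.prems n_def by simp
  moreover have "(\<Sum>i\<in>R. w i * poly Q (x i)) = 0"
  proof (cases "Q = 0")
    case False
    have "degree Q \<le> n"
      unfolding Q_def using degree_smult_le[of "lead_coeff P" "B n"] deg[of n]
      by (intro degree_diff_le) (simp_all add: n_def)
    moreover have "coeff Q n = 0"
      using deg monic by (simp add: Q_def n_def)
    moreover have "degree Q \<noteq> n"
      using False \<open>coeff Q n = 0\<close> by (metis leading_coeff_0_iff)
    ultimately have "degree Q < degree P"
      by (simp add: n_def)
    with less show ?thesis
      by simp
  qed simp
  ultimately show ?case
    by simp
qed

lemma weight_eq_0_if_poly_sums_vanish:
  fixes w :: "'a \<Rightarrow> 'k::idom"
  assumes R: "finite R" "inj_on x R" "card R \<le> M"
    and vanish: "\<And>P. degree P < M \<Longrightarrow> (\<Sum>i\<in>R. w i * poly P (x i)) = 0"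
    and j: "j \<in> R"
  shows "w j = 0"
proof -
  define P where "P = (\<Prod>i\<in>R - {j}. [:- x i, 1:])"
  have "degree P = card R - 1"
    unfolding P_def using R j by (subst degree_prod_sum_eq) (auto simp: card_Diff_singleton)
  moreover have "0 < card R"
    using R j card_gt_0_iff by blast
  ultimately have "(\<Sum>i\<in>R. w i * poly P (x i)) = 0"
    using R by (intro vanish) linarith
  moreover have "(\<Sum>i\<in>R. w i * poly P (x i)) = w j * poly P (x j)"
  proof (rule sum.remove[OF \<open>finite R\<close> j, THEN trans], simp)
    show "(\<Sum>i\<in>R - {j}. w i * poly P (x i)) = 0"
      using \<open>finite R\<close> by (intro sum.neutral) (auto simp: P_def poly_prod)
  qed
  moreover have "poly P (x j) \<noteq> 0"
    using R j by (auto simp: P_def poly_prod inj_on_def)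
  ultimately show ?thesis
    by simp
qed

lemma pascal_recurrence_vanishing:
  fixes S :: "nat \<Rightarrow> nat \<Rightarrow> 'k::{idom,ring_char_0}"
  assumes rec: "\<And>k l. of_nat (T - k - l) * S k l = S (Suc k) l + S k (Suc l)"
    and top: "\<And>k. k < M \<Longrightarrow> S k (M - 1 - k) = 0"
    and "M \<le> T" "k + l < M"
  shows "S k l = 0"
  using \<open>k + l < M\<close>
proof (induction "M - 1 - (k + l)" arbitrary: k l)
  case 0
  then have "l = M - 1 - k"
    by arith
  with 0 top show ?case
    by simp
next
  case (Suc m)
  then have "S (Suc k) l = 0" "S k (Suc l) = 0"
    by (auto intro!: Suc.hyps)
  then have "of_nat (T - k - l) * S k l = 0"
    unfolding rec by simp
  moreover have "(of_nat (T - k - l) :: 'k) \<noteq> 0"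
    using Suc.prems \<open>M \<le> T\<close> by (simp only: of_nat_eq_0_iff)
  ultimately show ?case
    by simp
qed

lemma falling_fact_weights_eq_0:
  fixes w :: "'a \<Rightarrow> 'k::{idom,ring_char_0}"
  assumes "finite R" "inj_on u R" and uv: "\<And>i. i \<in> R \<Longrightarrow> u i + v i = T"
    and "card R \<le> M" "M \<le> T"
    and eqs: "\<And>k. k < M \<Longrightarrow>
      (\<Sum>i\<in>R. w i * of_nat (falling_fact (u i) k * falling_fact (v i) (M - 1 - k))) = 0"
    and "j \<in> R"
  shows "w j = 0"
proof -
  define S where "S k l = (\<Sum>i\<in>R. w i * of_nat (falling_fact (u i) k * falling_fact (v i) l))" for k l
  have rec: "of_nat (T - k - l) * S k l = S (Suc k) l + S k (Suc l)" for k l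
  proof -
    have "of_nat (T - k - l) * S k l =
        (\<Sum>i\<in>R. w i * of_nat ((T - k - l) * (falling_fact (u i) k * falling_fact (v i) l)))"
      by (simp add: S_def sum_distrib_left mult_ac)
    also have "\<dots> = (\<Sum>i\<in>R. w i * of_nat (falling_fact (u i) (Suc k) * falling_fact (v i) l +
        falling_fact (u i) k * falling_fact (v i) (Suc l)))"
    proof (rule sum.cong)
      fix i
      assume "i \<in> R"
      then show "w i * of_nat ((T - k - l) * (falling_fact (u i) k * falling_fact (v i) l)) =
          w i * of_nat (falling_fact (u i) (Suc k) * falling_fact (v i) l +
            falling_fact (u i) k * falling_fact (v i) (Suc l))"
        by (simp only: falling_fact_Suc_add[OF uv])
    qed simp
    also have "\<dots> = S (Suc k) l + S k (Suc l)"
      by (simp add: S_def distrib_left sum.distrib)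
    finally show ?thesis .
  qed
  have "S k 0 = 0" if "k < M" for k
  proof (rule pascal_recurrence_vanishing[of T S M])
    show "S k (M - 1 - k) = 0" if "k < M" for k
      using eqs[OF that] by (simp add: S_def)
  qed (use rec that \<open>M \<le> T\<close> in simp_all)
  then have falling_sums: "(\<Sum>i\<in>R. w i * poly (falling_poly k) (of_nat (u i))) = 0" if "k < M" for k
    using that by (simp add: S_def poly_falling_poly)
  have poly_sums: "(\<Sum>i\<in>R. w i * poly P (of_nat (u i))) = 0" if "degree P < M" for P :: "'k poly"
    using degree_falling_poly lead_coeff_falling_poly falling_sums that
    by (rule sum_poly_eq_0_of_monic_basis)
  have "inj_on (\<lambda>i. of_nat (u i) :: 'k) R"
    using \<open>inj_on u R\<close> by (simp add: inj_on_def)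
  from \<open>finite R\<close> this \<open>card R \<le> M\<close> poly_sums \<open>j \<in> R\<close> show ?thesis
    by (rule weight_eq_0_if_poly_sums_vanish)
qed

section \<open>Square linear systems\<close>

lemma square_mat_mult_vec_solvable:
  fixes A :: "'k::field mat"
  assumes A: "A \<in> carrier_mat K K"
    and kernel: "\<And>z. z \<in> carrier_vec K \<Longrightarrow> A *\<^sub>v z = 0\<^sub>v K \<Longrightarrow> z = 0\<^sub>v K"
    and "y \<in> carrier_vec K"
  obtains z where "z \<in> carrier_vec K" "A *\<^sub>v z = y"
proof -
  have "det A \<noteq> 0"
    using kernel det_0_iff_vec_prod_zero[OF A] by blast
  then obtain B where B: "B \<in> carrier_mat K K" "A * B = 1\<^sub>m K"
    using det_non_zero_imp_unit[OF A] unfolding Units_def ring_mat_def by auto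
  show ?thesis
  proof
    show "B *\<^sub>v y \<in> carrier_vec K"
      using B \<open>y \<in> carrier_vec K\<close> by simp
    show "A *\<^sub>v (B *\<^sub>v y) = y"
      using A B \<open>y \<in> carrier_vec K\<close> by (simp add: assoc_mult_mat_vec[symmetric])
  qed
qed

lemma square_system_solvable:
  fixes m :: "'c \<Rightarrow> 'r \<Rightarrow> 'k::field"
  assumes "finite R" "finite C" "card R = card C"
    and only_trivial:
      "\<And>x r. (\<And>c. c \<in> C \<Longrightarrow> (\<Sum>r\<in>R. m c r * x r) = 0) \<Longrightarrow> r \<in> R \<Longrightarrow> x r = 0"
  shows "\<exists>x. \<forall>c\<in>C. (\<Sum>r\<in>R. m c r * x r) = y c"
proof -
  define K where "K = card R"
  obtain \<rho> where \<rho>: "bij_betw \<rho> {0..<K} R"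
    using ex_bij_betw_nat_finite[OF \<open>finite R\<close>] K_def by blast
  obtain \<gamma> where \<gamma>: "bij_betw \<gamma> {0..<K} C"
    using ex_bij_betw_nat_finite[OF \<open>finite C\<close>] K_def \<open>card R = card C\<close> by auto
  define A where "A = mat K K (\<lambda>(p, q). m (\<gamma> p) (\<rho> q))"
  define \<rho>' where "\<rho>' = inv_into {0..<K} \<rho>"
  have \<rho>'_\<rho>: "\<rho>' (\<rho> q) = q" if "q < K" for q
    using \<rho> that unfolding \<rho>'_def by (simp add: bij_betw_inv_into_left)
  have A_mult: "(A *\<^sub>v z) $ p = (\<Sum>r\<in>R. m (\<gamma> p) r * z $ \<rho>' r)"
    if "z \<in> carrier_vec K" "p < K" for z p
  proof -
    have "(\<Sum>r\<in>R. m (\<gamma> p) r * z $ \<rho>' r) = (\<Sum>q\<in>{0..<K}. m (\<gamma> p) (\<rho> q) * z $ \<rho>' (\<rho> q))"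
      by (rule sum.reindex_bij_betw[OF \<rho>, symmetric])
    also have "\<dots> = (A *\<^sub>v z) $ p"
      using that by (simp add: A_def \<rho>'_\<rho> scalar_prod_def)
    finally show ?thesis ..
  qed
  have C_\<gamma>: "\<exists>p<K. c = \<gamma> p" if "c \<in> C" for c
    using \<gamma> that unfolding bij_betw_def by auto
  have A: "A \<in> carrier_mat K K"
    by (simp add: A_def)
  have kernel: "z = 0\<^sub>v K" if z: "z \<in> carrier_vec K" "A *\<^sub>v z = 0\<^sub>v K" for z
  proof (rule eq_vecI)
    have "(\<Sum>r\<in>R. m c r * z $ \<rho>' r) = 0" if "c \<in> C" for c
      using C_\<gamma>[OF that] A_mult z by force
    then have zero: "z $ \<rho>' r = 0" if "r \<in> R" for r
      using that by (rule only_trivial[of "\<lambda>r. z $ \<rho>' r"])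
    fix q
    assume "q < dim_vec (0\<^sub>v K :: 'k vec)"
    then have "q < K" "\<rho> q \<in> R"
      using \<rho> by (auto simp: bij_betw_def)
    then show "z $ q = 0\<^sub>v K $ q"
      using zero[of "\<rho> q"] \<rho>'_\<rho>[of q] by simp
  qed (use z in simp)
  obtain z where z: "z \<in> carrier_vec K" "A *\<^sub>v z = vec K (\<lambda>p. y (\<gamma> p))"
    by (rule square_mat_mult_vec_solvable[OF A kernel vec_carrier])
  then have "\<forall>c\<in>C. (\<Sum>r\<in>R. m c r * z $ \<rho>' r) = y c"
    using C_\<gamma> A_mult by force
  then show ?thesis
    by (rule exI[of _ "\<lambda>r. z $ \<rho>' r"])
qed

section \<open>Multiplication by powers of x + y\<close>

lemma lookup_linear_times:
  fixes g :: "'k::comm_ring_1 poly2"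
  shows "Poly_Mapping.lookup ((varx + vary) * g) (c, e) =
    (if 0 < c then Poly_Mapping.lookup g (c - 1, e) else 0) +
    (if 0 < e then Poly_Mapping.lookup g (c, e - 1) else 0)"
  by (simp add: distrib_right lookup_add varx_def vary_def mono2_def lookup_single_times Suc_le_eq)

lemma lookup_homog_eq_0: "f \<in> homog n \<Longrightarrow> i + j \<noteq> n \<Longrightarrow> Poly_Mapping.lookup f (i, j) = 0"
  unfolding homog_def by (auto simp: in_keys_iff)

lemma homog_diff: "p \<in> homog n \<Longrightarrow> q \<in> homog n \<Longrightarrow> p - q \<in> homog n"
  unfolding homog_def using keys_diff[of p q] by blast

(* The coefficient of x^c y^(n+d-c) in (x+y)^d x^i y^(n-i). *)
definition shifted_choose :: "nat \<Rightarrow> nat \<Rightarrow> nat \<Rightarrow> nat" where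
  "shifted_choose d c i = (if i \<le> c then d choose (c - i) else 0)"

lemma shifted_choose_0: "shifted_choose 0 c i = (if i = c then 1 else 0)"
  by (auto simp: shifted_choose_def)

lemma shifted_choose_Suc:
  "shifted_choose (Suc d) c i = (if 0 < c then shifted_choose d (c - 1) i else 0) + shifted_choose d c i"
  by (cases c) (auto simp: shifted_choose_def Suc_diff_le le_Suc_eq)

lemma shifted_choose_eq_0: "d < c - i \<Longrightarrow> shifted_choose d c i = 0"
  by (simp add: shifted_choose_def binomial_eq_0)

lemma lookup_linear_power_times:
  fixes f :: "'k::comm_ring_1 poly2"
  assumes "f \<in> homog n"
  shows "Poly_Mapping.lookup ((varx + vary) ^ d * f) (c, e) =
    (if c + e = n + d
     then \<Sum>i\<le>n. Poly_Mapping.lookup f (i, n - i) * of_nat (shifted_choose d c i) else 0)"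
proof (induction d arbitrary: c e)
  case 0
  show ?case
  proof (cases "c + e = n")
    case True
    have "(\<Sum>i\<le>n. Poly_Mapping.lookup f (i, n - i) * of_nat (shifted_choose 0 c i)) =
        (\<Sum>i\<le>n. if i = c then Poly_Mapping.lookup f (i, n - i) else 0)"
      by (rule sum.cong) (simp_all add: shifted_choose_0)
    moreover from True have "e = n - c" "c \<le> n"
      by auto
    ultimately show ?thesis
      by simp
  qed (simp add: lookup_homog_eq_0[OF assms])
next
  case (Suc d)
  define g where "g = (varx + vary) ^ d * f"
  have "(varx + vary) ^ Suc d * f = (varx + vary) * g"
    by (simp add: g_def mult.assoc)
  then have lookup_Suc: "Poly_Mapping.lookup ((varx + vary) ^ Suc d * f) (c, e) =
      (if 0 < c then Poly_Mapping.lookup g (c - 1, e) else 0) +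
      (if 0 < e then Poly_Mapping.lookup g (c, e - 1) else 0)"
    by (simp only: lookup_linear_times)
  show ?case
  proof (cases "c + e = n + Suc d")
    case True
    have left: "(if 0 < c then Poly_Mapping.lookup g (c - 1, e) else 0) =
        (\<Sum>i\<le>n. Poly_Mapping.lookup f (i, n - i) *
          of_nat (if 0 < c then shifted_choose d (c - 1) i else 0))"
      using True by (simp add: g_def Suc.IH)
    have right: "(if 0 < e then Poly_Mapping.lookup g (c, e - 1) else 0) =
        (\<Sum>i\<le>n. Poly_Mapping.lookup f (i, n - i) * of_nat (shifted_choose d c i))"
    proof (cases "0 < e")
      case False
      with True have "c = n + Suc d"
        by simp
      with False show ?thesis
        by (auto intro!: sum.neutral[symmetric] simp: shifted_choose_eq_0)
    qed (use True in \<open>simp add: g_def Suc.IH\<close>)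
    show ?thesis
      using True unfolding lookup_Suc left right
      by (simp add: shifted_choose_Suc distrib_left sum.distrib)
  next
    case False
    then show ?thesis
      unfolding lookup_Suc by (auto simp: g_def Suc.IH)
  qed
qed

lemma linear_power_times_homog:
  fixes f :: "'k::comm_ring_1 poly2"
  assumes "f \<in> homog n"
  shows "(varx + vary) ^ d * f \<in> homog (n + d)"
proof -
  have "i + j = n + d" if "(i, j) \<in> Poly_Mapping.keys ((varx + vary) ^ d * f)" for i j
    using that lookup_linear_power_times[OF assms, of d i j] by (auto simp: in_keys_iff split: if_splits)
  then show ?thesis
    unfolding homog_def by auto
qed

(* The exponents i with x^i y^(n-i) outside (x^a, y^b). *)
definition box_slice :: "nat \<Rightarrow> nat \<Rightarrow> nat \<Rightarrow> nat set" where
  "box_slice a b n = {i. i \<le> n \<and> i < a \<and> n < i + b}"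

lemma finite_box_slice [simp]: "finite (box_slice a b n)"
  unfolding box_slice_def by (rule finite_subset[of _ "{..n}"]) auto

lemma card_box_slice_le: "card (box_slice a b n) \<le> a" "card (box_slice a b n) \<le> b"
proof -
  have "card (box_slice a b n) \<le> card {..<a}"
    by (rule card_mono) (auto simp: box_slice_def)
  then show "card (box_slice a b n) \<le> a"
    by simp
  have "card (box_slice a b n) \<le> card {n + 1 - b..<n + 1}"
    by (rule card_mono) (auto simp: box_slice_def)
  then show "card (box_slice a b n) \<le> b"
    by simp
qed

lemma card_box_slice:
  assumes "a \<le> N + 1" "b \<le> N + 1"
  shows "card (box_slice a b N) = a + b - 1 - N"
proof -
  have "box_slice a b N = {N + 1 - b..<a}"
    using assms unfolding box_slice_def by auto
  then have "card (box_slice a b N) = a - (N + 1 - b)"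
    by simp
  with assms show ?thesis
    by arith
qed

abbreviation box_ideal :: "nat \<Rightarrow> nat \<Rightarrow> 'k::comm_ring_1 poly2 set" where
  "box_ideal a b \<equiv> ideal_gen {varx ^ a, vary ^ b}"

lemma box_ideal_eq: "box_ideal a b = ideal_gen (monomials {(a, 0), (0, b)})"
  by (simp add: varx_power vary_power)

lemma lookup_box_ideal_eq_0:
  assumes "p \<in> box_ideal a b" "i < a" "j < b"
  shows "Poly_Mapping.lookup p (i, j) = 0"
  using assms keys_monomial_ideal[of p "{(a, 0), (0, b)}" "(i, j)"]
  by (auto simp: box_ideal_eq in_keys_iff)

lemma homog_in_box_ideal:
  fixes p :: "'k::comm_ring_1 poly2"
  assumes "p \<in> homog N"
    and box: "\<And>c. c \<in> box_slice a b N \<Longrightarrow> Poly_Mapping.lookup p (c, N - c) = 0"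
  shows "p \<in> box_ideal a b"
  unfolding box_ideal_eq monomial_ideal_iff
proof
  fix k
  assume k: "k \<in> Poly_Mapping.keys p"
  obtain i j where "k = (i, j)"
    by fastforce
  with k assms(1) have "i + j = N"
    unfolding homog_def by auto
  with k box[of i] \<open>k = (i, j)\<close> have "\<not> (i < a \<and> j < b)"
    by (auto simp: box_slice_def in_keys_iff)
  with \<open>k = (i, j)\<close> show "\<exists>e\<in>{(a, 0), (0, b)}. e \<le> k"
    by auto
qed

lemma lookup_linear_power_times_box:
  fixes f :: "'k::comm_ring_1 poly2"
  assumes "f \<in> homog n" "c \<in> box_slice a b (n + d)"
  shows "Poly_Mapping.lookup ((varx + vary) ^ d * f) (c, n + d - c) =
    (\<Sum>i\<in>box_slice a b n. Poly_Mapping.lookup f (i, n - i) * of_nat (shifted_choose d c i))"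
proof -
  have "shifted_choose d c i = 0" if "i \<le> n" "i \<notin> box_slice a b n" for i
  proof -
    from that assms(2) have "c < i \<or> d < c - i"
      unfolding box_slice_def by auto
    then show ?thesis
      by (auto simp: shifted_choose_def binomial_eq_0)
  qed
  then have "(\<Sum>i\<le>n. Poly_Mapping.lookup f (i, n - i) * of_nat (shifted_choose d c i)) =
      (\<Sum>i\<in>box_slice a b n. Poly_Mapping.lookup f (i, n - i) * of_nat (shifted_choose d c i))"
    by (intro sum.mono_neutral_right) (auto simp: box_slice_def)
  with assms show ?thesis
    by (simp add: lookup_linear_power_times box_slice_def)
qed

lemma falling_fact_eq_shifted_choose:
  assumes "i \<in> box_slice a b n" "k + l + n + d + 2 = a + b"
  shows "fact d * falling_fact (a - 1 - i) k * falling_fact (i + b - 1 - n) l =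
    (if k < a \<and> a - 1 - k \<le> n + d then shifted_choose d (a - 1 - k) i else 0) *
      fact (a - 1 - i) * fact (i + b - 1 - n)"
proof -
  from assms have "(a - 1 - i) + (i + b - 1 - n) = d + k + l"
    unfolding box_slice_def by auto
  then have "fact d * falling_fact (a - 1 - i) k * falling_fact (i + b - 1 - n) l =
      (if k \<le> a - 1 - i then d choose (a - 1 - i - k) else 0) * fact (a - 1 - i) * fact (i + b - 1 - n)"
    by (rule choose_mult_fact_eq_falling_fact[symmetric])
  also have "(if k \<le> a - 1 - i then d choose (a - 1 - i - k) else 0) =
      (if k < a \<and> a - 1 - k \<le> n + d then shifted_choose d (a - 1 - k) i else 0)"
    using assms(1) unfolding box_slice_def shifted_choose_def by (auto simp: binomial_eq_0 add.commute)
  finally show ?thesis .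
qed

(* Rescaling column i by 1 / (u! v!) with u = a - 1 - i, v = i + b - 1 - n turns row
   c = a - 1 - k into a sum over falling factorials of u and v, where u + v is independent of i. *)
lemma falling_fact_sum_eq_0_of_rows:
  fixes phi :: "nat \<Rightarrow> 'k::field_char_0"
  assumes R: "R \<subseteq> box_slice a b n"
    and rows: "\<And>c. c \<in> box_slice a b (n + d) \<Longrightarrow>
      (\<Sum>i\<in>R. phi i * of_nat (shifted_choose d c i)) = 0"
    and kl: "k + l + n + d + 2 = a + b"
  shows "(\<Sum>i\<in>R. phi i / of_nat (fact (a - 1 - i) * fact (i + b - 1 - n)) *
    of_nat (falling_fact (a - 1 - i) k * falling_fact (i + b - 1 - n) l)) = 0"
proof -
  let ?c = "a - 1 - k"
  have "of_nat (fact d) * (\<Sum>i\<in>R. phi i / of_nat (fact (a - 1 - i) * fact (i + b - 1 - n)) *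
      of_nat (falling_fact (a - 1 - i) k * falling_fact (i + b - 1 - n) l)) =
      (\<Sum>i\<in>R. phi i * of_nat (if k < a \<and> ?c \<le> n + d then shifted_choose d ?c i else 0))"
    unfolding sum_distrib_left
  proof (rule sum.cong[OF refl])
    fix i
    assume "i \<in> R"
    with R kl have "of_nat (fact d * falling_fact (a - 1 - i) k * falling_fact (i + b - 1 - n) l) =
        (of_nat ((if k < a \<and> ?c \<le> n + d then shifted_choose d ?c i else 0) *
          fact (a - 1 - i) * fact (i + b - 1 - n)) :: 'k)"
      by (subst falling_fact_eq_shifted_choose) auto
    then show "of_nat (fact d) * (phi i / of_nat (fact (a - 1 - i) * fact (i + b - 1 - n)) *
        of_nat (falling_fact (a - 1 - i) k * falling_fact (i + b - 1 - n) l)) =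
        phi i * of_nat (if k < a \<and> ?c \<le> n + d then shifted_choose d ?c i else 0)"
      by (simp add: field_simps)
  qed
  also have "\<dots> = 0"
  proof (cases "k < a \<and> ?c \<le> n + d")
    case True
    with kl have "?c \<in> box_slice a b (n + d)"
      by (auto simp: box_slice_def)
    with True show ?thesis
      using rows by simp
  qed auto
  finally show ?thesis
    by simp
qed

lemma shifted_choose_columns_independent:
  fixes phi :: "nat \<Rightarrow> 'k::field_char_0"
  assumes "0 < d" and R: "R \<subseteq> box_slice a b n" and card: "card R + (n + d) < a + b"
    and rows: "\<And>c. c \<in> box_slice a b (n + d) \<Longrightarrow>
      (\<Sum>i\<in>R. phi i * of_nat (shifted_choose d c i)) = 0"
    and "j \<in> R"
  shows "phi j = 0"
proof -
  define M where "M = a + b - 1 - (n + d)"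
  define T where "T = a + b - 2 - n"
  define u where "u i = a - 1 - i" for i
  define v where "v i = i + b - 1 - n" for i
  define w where "w i = phi i / of_nat (fact (u i) * fact (v i))" for i
  have fin: "finite R"
    using R by (rule finite_subset) simp
  have slice: "i \<le> n" "i < a" "n < i + b" if "i \<in> R" for i
    using R that unfolding box_slice_def by auto
  have "0 < card R"
    using fin \<open>j \<in> R\<close> card_gt_0_iff by blast
  with card slice[OF \<open>j \<in> R\<close>] \<open>0 < d\<close> have M: "card R \<le> M" "M \<le> T"
    unfolding M_def T_def by auto
  have uv: "u i + v i = T" if "i \<in> R" for i
    using slice[OF that] unfolding u_def v_def T_def by arith
  have "inj_on u R"
  proof (rule inj_onI)
    fix x y
    assume "x \<in> R" "y \<in> R" "u x = u y"
    with slice[OF \<open>x \<in> R\<close>] slice[OF \<open>y \<in> R\<close>] show "x = y"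
      unfolding u_def by arith
  qed
  have eqs: "(\<Sum>i\<in>R. w i * of_nat (falling_fact (u i) k * falling_fact (v i) (M - 1 - k))) = 0"
    if "k < M" for k
  proof -
    from that have "k + (M - 1 - k) + n + d + 2 = a + b"
      unfolding M_def by arith
    with R rows show ?thesis
      unfolding w_def u_def v_def by (rule falling_fact_sum_eq_0_of_rows)
  qed
  from fin \<open>inj_on u R\<close> uv M eqs \<open>j \<in> R\<close> have "w j = 0"
    by (rule falling_fact_weights_eq_0)
  then show "phi j = 0"
    by (simp add: w_def)
qed

section \<open>The Lefschetz maps on I/J\<close>

(* The monomial basis of (I/J)_n for the ideal I generated by the monomials with exponents in E. *)
definition quotient_exponents :: "(nat \<times> nat) set \<Rightarrow> nat \<Rightarrow> nat \<Rightarrow> nat \<Rightarrow> nat set" where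
  "quotient_exponents E a b n = {i \<in> box_slice a b n. \<exists>e\<in>E. e \<le> (i, n - i)}"

lemma lookup_monomial_ideal_outside:
  fixes f :: "'k::comm_ring_1 poly2"
  assumes "f \<in> ideal_gen (monomials E)" "i \<in> box_slice a b n - quotient_exponents E a b n"
  shows "Poly_Mapping.lookup f (i, n - i) = 0"
  using assms keys_monomial_ideal[of f E "(i, n - i)"] by (auto simp: quotient_exponents_def in_keys_iff)

lemma lefschetz_mult_inj:
  assumes "0 < d" and small: "card (quotient_exponents E a b n) + (n + d) < a + b"
  shows "mult_inj (ideal_gen (monomials E) :: 'k::field_char_0 poly2 set) (box_ideal a b) (varx + vary) d n"
  unfolding mult_inj_def
proof (intro ballI impI)
  fix f :: "'k poly2"
  assume f: "f \<in> ideal_gen (monomials E) \<inter> homog n" and "(varx + vary) ^ d * f \<in> box_ideal a b"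
  let ?U = "quotient_exponents E a b n"
  have outside: "Poly_Mapping.lookup f (i, n - i) = 0" if "i \<in> box_slice a b n - ?U" for i
    using f that by (auto intro: lookup_monomial_ideal_outside)
  have rows: "(\<Sum>i\<in>?U. Poly_Mapping.lookup f (i, n - i) * of_nat (shifted_choose d c i)) = 0"
    if "c \<in> box_slice a b (n + d)" for c
  proof -
    have "(\<Sum>i\<in>?U. Poly_Mapping.lookup f (i, n - i) * of_nat (shifted_choose d c i)) =
        (\<Sum>i\<in>box_slice a b n. Poly_Mapping.lookup f (i, n - i) * of_nat (shifted_choose d c i))"
      using outside by (intro sum.mono_neutral_left) (auto simp: quotient_exponents_def)
    also have "\<dots> = Poly_Mapping.lookup ((varx + vary) ^ d * f) (c, n + d - c)"
      using f that by (simp add: lookup_linear_power_times_box)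
    also have "\<dots> = 0"
      using that by (intro lookup_box_ideal_eq_0[OF \<open>(varx + vary) ^ d * f \<in> box_ideal a b\<close>])
        (auto simp: box_slice_def)
    finally show ?thesis .
  qed
  have "Poly_Mapping.lookup f (i, n - i) = 0" if "i \<in> ?U" for i
    by (rule shifted_choose_columns_independent[OF \<open>0 < d\<close> _ small rows that])
      (auto simp: quotient_exponents_def)
  with outside have "Poly_Mapping.lookup f (i, n - i) = 0" if "i \<in> box_slice a b n" for i
    using that by blast
  with f show "f \<in> box_ideal a b"
    by (intro homog_in_box_ideal) auto
qed

lemma lefschetz_power_times_sum_single:
  fixes x :: "nat \<Rightarrow> 'k::comm_ring_1"
  assumes "R \<subseteq> quotient_exponents E a b n"
  defines "f \<equiv> \<Sum>r\<in>R. Poly_Mapping.single (r, n - r) (x r)"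
  shows "f \<in> ideal_gen (monomials E) \<inter> homog n"
    and "\<And>c. c \<in> box_slice a b (n + d) \<Longrightarrow>
      Poly_Mapping.lookup ((varx + vary) ^ d * f) (c, n + d - c) =
      (\<Sum>r\<in>R. of_nat (shifted_choose d c r) * x r)"
proof -
  have R: "finite R" "R \<subseteq> box_slice a b n"
    using assms(1) finite_subset[of R "box_slice a b n"] by (auto simp: quotient_exponents_def)
  have "f \<in> ideal_gen (monomials E)"
    unfolding f_def
  proof (rule ideal_gen_sum[OF \<open>finite R\<close>])
    fix r
    assume "r \<in> R"
    with assms(1) obtain e where "e \<in> E" "e \<le> (r, n - r)"
      by (auto simp: quotient_exponents_def)
    then show "Poly_Mapping.single (r, n - r) (x r) \<in> ideal_gen (monomials E)"
      by (rule single_in_monomial_ideal)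
  qed
  moreover have "f \<in> homog n"
  proof -
    have "Poly_Mapping.keys f \<subseteq> (\<Union>r\<in>R. Poly_Mapping.keys (Poly_Mapping.single (r, n - r) (x r)))"
      unfolding f_def by (rule keys_sum)
    then show ?thesis
      using R unfolding homog_def by (fastforce simp: box_slice_def split: if_splits)
  qed
  ultimately show "f \<in> ideal_gen (monomials E) \<inter> homog n"
    by blast
  have lookup_f: "Poly_Mapping.lookup f (i, n - i) = (if i \<in> R then x i else 0)" if "i \<le> n" for i
  proof -
    have "Poly_Mapping.lookup f (i, n - i) = (\<Sum>r\<in>R. if r = i then x r else 0)"
      unfolding f_def lookup_sum
      by (intro sum.cong) (use that R in \<open>auto simp: lookup_single box_slice_def\<close>)
    with \<open>finite R\<close> show ?thesis
      by simp
  qed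
  fix c
  assume "c \<in> box_slice a b (n + d)"
  with \<open>f \<in> homog n\<close> have "Poly_Mapping.lookup ((varx + vary) ^ d * f) (c, n + d - c) =
      (\<Sum>i\<in>box_slice a b n. Poly_Mapping.lookup f (i, n - i) * of_nat (shifted_choose d c i))"
    by (rule lookup_linear_power_times_box)
  also have "\<dots> = (\<Sum>r\<in>R. of_nat (shifted_choose d c r) * x r)"
    using lookup_f R by (intro sum.mono_neutral_cong_right) (auto simp: box_slice_def)
  finally show "Poly_Mapping.lookup ((varx + vary) ^ d * f) (c, n + d - c) =
      (\<Sum>r\<in>R. of_nat (shifted_choose d c r) * x r)" .
qed

lemma lefschetz_mult_surj:
  assumes "0 < d" and large: "a + b \<le> card (quotient_exponents E a b n) + (n + d)"
  shows "mult_surj (ideal_gen (monomials E) :: 'k::field_char_0 poly2 set) (box_ideal a b) (varx + vary) d n"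
  unfolding mult_surj_def
proof
  fix g :: "'k poly2"
  assume g: "g \<in> ideal_gen (monomials E) \<inter> homog (n + d)"
  let ?U = "quotient_exponents E a b n" and ?C = "box_slice a b (n + d)"
  have "card ?U \<le> card (box_slice a b n)"
    by (rule card_mono) (auto simp: quotient_exponents_def)
  with large card_box_slice_le[of a b n] have card_C: "card ?C = a + b - 1 - (n + d)"
    by (intro card_box_slice) linarith+
  with large have "card ?C \<le> card ?U"
    by linarith
  then obtain R where R: "R \<subseteq> ?U" "card R = card ?C" "finite R"
    by (rule obtain_subset_with_card_n)
  have "\<exists>x. \<forall>c\<in>?C.
      (\<Sum>r\<in>R. of_nat (shifted_choose d c r) * x r) = Poly_Mapping.lookup g (c, n + d - c)"
  proof (rule square_system_solvable)
    fix x :: "nat \<Rightarrow> 'k" and r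
    assume rows: "\<And>c. c \<in> ?C \<Longrightarrow> (\<Sum>r\<in>R. of_nat (shifted_choose d c r) * x r) = 0"
      and "r \<in> R"
    then have "0 < card R"
      using \<open>finite R\<close> card_gt_0_iff by blast
    with R(2) card_C have "card R + (n + d) < a + b"
      by linarith
    moreover have "R \<subseteq> box_slice a b n"
      using R(1) by (auto simp: quotient_exponents_def)
    ultimately show "x r = 0"
      using \<open>0 < d\<close> rows \<open>r \<in> R\<close> by (intro shifted_choose_columns_independent[where phi = x])
        (simp_all add: mult.commute)
  qed (use R in simp_all)
  then obtain x where x: "\<And>c. c \<in> ?C \<Longrightarrow>
      (\<Sum>r\<in>R. of_nat (shifted_choose d c r) * x r) = Poly_Mapping.lookup g (c, n + d - c)"
    by blast
  define f where "f = (\<Sum>r\<in>R. Poly_Mapping.single (r, n - r) (x r))"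
  note f = lefschetz_power_times_sum_single[OF R(1), where x = x, folded f_def]
  have "g - (varx + vary) ^ d * f \<in> box_ideal a b"
  proof (rule homog_in_box_ideal)
    show "g - (varx + vary) ^ d * f \<in> homog (n + d)"
      using g f(1) by (intro homog_diff linear_power_times_homog) auto
  qed (simp add: lookup_minus f(2) x)
  with f(1) show "\<exists>f\<in>ideal_gen (monomials E) \<inter> homog n. g - (varx + vary) ^ d * f \<in> box_ideal a b"
    by blast
qed

theorem theorem3p1:
  fixes I :: "'k::field_char_0 poly2 set" and a b :: nat
  assumes "a > 0" and "b > 0"
    and "monomial_ideal I"
    and "ideal_gen {varx ^ a, vary ^ b} \<subseteq> I"
  shows "strong_lefschetz_quot I (ideal_gen {varx ^ a, vary ^ b})"
proof -
  obtain E where I: "I = ideal_gen (monomials E)"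
    using assms(3) unfolding monomial_ideal_def by blast
  have "varx + vary \<in> (homog 1 :: 'k poly2 set)"
    unfolding homog_def using keys_add[of "varx :: 'k poly2" vary]
    by (auto simp: varx_def vary_def mono2_def)
  moreover have "mult_inj I (box_ideal a b) (varx + vary) d n \<or> mult_surj I (box_ideal a b) (varx + vary) d n"
    if "0 < d" for d n
    unfolding I using lefschetz_mult_inj[OF that] lefschetz_mult_surj[OF that] by (meson not_less)
  ultimately show ?thesis
    unfolding strong_lefschetz_quot_def by blast
qed

end
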